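(* Let $n\in\mathbb{N}$ and let $(\Pi_1,\Pi_2,\dots,\Pi_n)$ be a uniformly random permutation of $(1,2,\dots,n)$. Then for all $r\ge1$, $$\Pr\Big[\big|\{i\in\{1,\dots,\lfloor n/2\rfloor\}:|\Pi_{2i-1}-\Pi_{2i}|\le r/12\}\big|\ge r\Big]\le 2^{-r}.$$ *)

theory Defs
  imports "HOL-Probability.Probability" "HOL-Combinatorics.Permutations"
begin

end

theory Submission
  imports Defs
begin

text \<open>Call the \<open>i\<close>-th pair of a permutation \<open>\<pi>\<close> close if \<open>\<bar>\<pi>(2i-1) - \<pi>(2i)\<bar> \<le> t\<close>, and let
  \<open>d = \<lfloor>t\<rfloor>\<close>. For a fixed set \<open>S\<close> of \<open>k\<close> pairs, all pairs of \<open>S\<close> are close with probability at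
  most \<open>(2d)^k / \<Prod>j<k. (n - 2j - 1)\<close>: adding a pair \<open>i\<close> to \<open>S\<close>, the map
  \<open>(\<sigma>, q) \<mapsto> (\<sigma> \<circ> (2i q), \<sigma>(2i) - \<sigma>(2i-1))\<close> sends a permutation that is close on \<open>S \<union> {i}\<close> together
  with a position \<open>q\<close> outside the pairs of \<open>S\<close> injectively to a permutation that is close on \<open>S\<close>
  together with one of \<open>2d\<close> nonzero gaps. A union bound over the
  \<open>(m choose k) \<le> (\<Prod>j<k. n - 2j - 1) / k!\<close> choices of \<open>S\<close>, where \<open>m = n div 2\<close>, bounds the
  probability of \<open>k\<close> close pairs by \<open>(2d)^k / k!\<close>. For \<open>t = r/12\<close> and \<open>k = \<lceil>r\<rceil>\<close> we have
  \<open>12d \<le> k\<close>, and \<open>k! \<ge> (k/3)^k\<close> turns this into \<open>2^-k\<close>.\<close>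

lemma self_power_le_three_power_fact: "real k ^ k \<le> 3 ^ k * fact k"
proof -
  have s: "(\<lambda>n. real k ^ n /\<^sub>R fact n) sums exp (real k)" by (rule exp_converges)
  have "real k ^ k / fact k \<le> exp (real k)"
    using sum_le_suminf[OF sums_summable[OF s], of "{k}"] sums_unique[OF s]
    by (simp add: divide_inverse mult.commute)
  also have "\<dots> = exp 1 ^ k" using exp_of_nat_mult[of k 1] by simp
  also have "\<dots> \<le> 3 ^ k" by (rule power_mono[OF exp_le]) simp
  finally show ?thesis by (simp add: divide_le_eq mult.commute)
qed

lemma power_div_fact_le_inverse_two_power:
  fixes d k :: nat
  assumes "12 * d \<le> k"
  shows "(2 * real d) ^ k / fact k \<le> 1 / 2 ^ k"
proof -
  have "3 ^ k * (2 ^ k * (2 * real d) ^ k) = (3 * (2 * (2 * real d))) ^ k"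
    by (simp only: power_mult_distrib)
  also have "\<dots> \<le> real k ^ k" using assms by (intro power_mono) linarith+
  also have "\<dots> \<le> 3 ^ k * fact k" by (rule self_power_le_three_power_fact)
  finally have "2 ^ k * (2 * real d) ^ k \<le> fact k" by simp
  then show ?thesis by (simp add: field_simps)
qed

lemma choose_mul_fact_le_prod:
  assumes "k \<le> m" "2 * m \<le> n"
  shows "(m choose k) * fact k \<le> (\<Prod>j<k. n - 2*j - 1)"
  using assms
proof (induction k arbitrary: m n)
  case 0
  then show ?case by simp
next
  case (Suc k)
  have IH: "((m - 1) choose k) * fact k \<le> (\<Prod>j<k. (n - 2) - 2*j - 1)"
    using Suc.IH[of "m - 1" "n - 2"] Suc.prems by simp
  have "(m choose Suc k) * fact (Suc k) = (Suc k * (m choose Suc k)) * fact k"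
    by (simp add: algebra_simps)
  also have "\<dots> = m * (((m - 1) choose k) * fact k)"
    using times_binomial_minus1_eq[of "Suc k" m] by simp
  also have "\<dots> \<le> (n - 1) * (\<Prod>j<k. (n - 2) - 2*j - 1)"
    using Suc.prems IH by (intro mult_le_mono) auto
  also have "\<dots> = (\<Prod>j<Suc k. n - 2*j - 1)"
    unfolding prod.lessThan_Suc_shift by (simp add: algebra_simps)
  finally show ?case .
qed

lemma card_nonzero_abs_le: "card {\<delta>::int. \<delta> \<noteq> 0 \<and> \<bar>\<delta>\<bar> \<le> d} \<le> 2 * nat d"
proof -
  have "{\<delta>::int. \<delta> \<noteq> 0 \<and> \<bar>\<delta>\<bar> \<le> d} = {-d..d} - {0}" by auto
  moreover have "card ({-d..d} - {0::int}) \<le> 2 * nat d"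
    by (cases "d \<ge> 0") (auto simp: card_Diff_singleton_if)
  ultimately show ?thesis by simp
qed

lemma card_Diff_pairs_ge:
  assumes "finite S"
  shows "n - 2 * card S - 1 \<le> card ({1..n} - (\<Union>j\<in>S. {2*j - 1, 2*j}) - {a})"
proof -
  define U where "U = (\<Union>j\<in>S. {2*j - 1, 2*j})"
  have "card U \<le> (\<Sum>j\<in>S. card {2*j - 1, 2*j})"
    unfolding U_def using assms by (rule card_UN_le)
  also have "\<dots> \<le> (\<Sum>j\<in>S. 2)" by (rule sum_mono) (simp add: card_insert_le_m1)
  finally have "card (U \<union> {a}) \<le> 2 * card S + 1"
    using card_Un_le[of U "{a}"] by simp
  moreover have "card {1..n} - card (U \<union> {a}) \<le> card ({1..n} - (U \<union> {a}))"
    by (rule diff_card_le_card_Diff) (simp add: U_def assms)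
  moreover have "{1..n} - (U \<union> {a}) = {1..n} - U - {a}" by blast
  ultimately show ?thesis unfolding U_def by simp
qed

lemma card_filter_atLeastAtMost_le: "card {i \<in> {1..m}. P i} \<le> m" for m :: nat
proof -
  have "{i \<in> {1..m}. P i} \<subseteq> {1..m}" by blast
  then show ?thesis using card_mono[of "{1..m}" "{i \<in> {1..m}. P i}"] by simp
qed

definition close_pairs :: "nat \<Rightarrow> real \<Rightarrow> nat set \<Rightarrow> (nat \<Rightarrow> nat) set" where
  "close_pairs n t S =
     {\<pi>. \<pi> permutes {1..n} \<and> (\<forall>i\<in>S. \<bar>real (\<pi> (2*i - 1)) - real (\<pi> (2*i))\<bar> \<le> t)}"

lemma finite_close_pairs: "finite (close_pairs n t S)"
  by (rule finite_subset[of _ "{\<pi>. \<pi> permutes {1..n}}"])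
     (auto simp: close_pairs_def finite_permutations)

text \<open>From \<open>\<sigma> \<circ> transpose b q\<close> one reads off \<open>\<sigma> a\<close> (as \<open>a \<noteq> b, q\<close>), then \<open>\<sigma> b\<close> from the gap,
  and then \<open>q\<close> as the preimage of \<open>\<sigma> b\<close>.\<close>

lemma inj_on_transpose_gap:
  assumes "a \<noteq> b"
  shows "inj_on (\<lambda>(\<sigma>, q). (\<sigma> \<circ> Transposition.transpose b q, int (\<sigma> b) - int (\<sigma> a)))
           ({\<sigma> :: nat \<Rightarrow> nat. inj \<sigma>} \<times> (UNIV - {a}))"
proof -
  have "\<sigma>1 = \<sigma>2 \<and> q1 = q2"
    if "inj \<sigma>1" "q1 \<noteq> a" "q2 \<noteq> a"
      and eq: "\<sigma>1 \<circ> Transposition.transpose b q1 = \<sigma>2 \<circ> Transposition.transpose b q2"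
      and gap: "int (\<sigma>1 b) - int (\<sigma>1 a) = int (\<sigma>2 b) - int (\<sigma>2 a)"
    for \<sigma>1 \<sigma>2 :: "nat \<Rightarrow> nat" and q1 q2
  proof -
    define \<pi> where "\<pi> = \<sigma>1 \<circ> Transposition.transpose b q1"
    have "\<sigma>1 a = \<sigma>2 a"
      using fun_cong[OF eq, of a] \<open>q1 \<noteq> a\<close> \<open>q2 \<noteq> a\<close> assms by (simp add: transpose_def)
    with gap have "\<sigma>1 b = \<sigma>2 b" by simp
    moreover have "\<pi> q1 = \<sigma>1 b" by (simp add: \<pi>_def transpose_def)
    moreover have "\<pi> q2 = \<sigma>2 b" by (simp add: \<pi>_def eq transpose_def)
    moreover have "inj \<pi>" using \<open>inj \<sigma>1\<close> by (simp add: \<pi>_def inj_compose)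
    ultimately have "q1 = q2" by (metis injD)
    moreover have "\<sigma>1 = \<pi> \<circ> Transposition.transpose b q1" by (simp add: \<pi>_def comp_assoc)
    moreover have "\<sigma>2 = \<pi> \<circ> Transposition.transpose b q2" by (simp add: \<pi>_def eq comp_assoc)
    ultimately show ?thesis by simp
  qed
  then show ?thesis by (intro inj_onI) (clarify, blast)
qed

lemma transpose_mem_close_pairs:
  assumes \<sigma>: "\<sigma> \<in> close_pairs n t S" and "0 \<notin> S" "i \<notin> S" "1 \<le> i" "2*i \<le> n"
    and q: "q \<in> {1..n} - (\<Union>j\<in>S. {2*j - 1, 2*j})"
  shows "\<sigma> \<circ> Transposition.transpose (2*i) q \<in> close_pairs n t S"
proof -
  have "\<sigma> \<circ> Transposition.transpose (2*i) q permutes {1..n}"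
    using \<sigma> q assms(4,5) by (intro permutes_compose permutes_swap_id) (auto simp: close_pairs_def)
  moreover have "(\<sigma> \<circ> Transposition.transpose (2*i) q) (2*j - 1) = \<sigma> (2*j - 1)"
    and "(\<sigma> \<circ> Transposition.transpose (2*i) q) (2*j) = \<sigma> (2*j)" if "j \<in> S" for j
  proof -
    have "j \<noteq> 0" using that assms(2) by metis
    moreover have "j \<noteq> i" "q \<noteq> 2*j - 1" "q \<noteq> 2*j" using that assms q by auto
    ultimately show "(\<sigma> \<circ> Transposition.transpose (2*i) q) (2*j - 1) = \<sigma> (2*j - 1)"
      and "(\<sigma> \<circ> Transposition.transpose (2*i) q) (2*j) = \<sigma> (2*j)" by (auto simp: transpose_def)
  qed
  ultimately show ?thesis using \<sigma> by (simp add: close_pairs_def)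
qed

lemma gap_mem_nonzero_abs_le:
  assumes "\<sigma> \<in> close_pairs n t (insert i S)" "1 \<le> i"
  shows "int (\<sigma> (2*i)) - int (\<sigma> (2*i - 1)) \<in> {\<delta>. \<delta> \<noteq> 0 \<and> \<bar>\<delta>\<bar> \<le> \<lfloor>t\<rfloor>}"
proof -
  have "inj \<sigma>" and close: "\<bar>real (\<sigma> (2*i - 1)) - real (\<sigma> (2*i))\<bar> \<le> t"
    using assms(1) by (auto simp: close_pairs_def permutes_inj)
  have "\<sigma> (2*i) \<noteq> \<sigma> (2*i - 1)" using \<open>inj \<sigma>\<close> assms(2) by (auto dest: injD)
  moreover have "real_of_int \<bar>int (\<sigma> (2*i)) - int (\<sigma> (2*i - 1))\<bar> \<le> t"
    using close by (simp add: abs_minus_commute)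
  then have "\<bar>int (\<sigma> (2*i)) - int (\<sigma> (2*i - 1))\<bar> \<le> \<lfloor>t\<rfloor>" by (simp only: le_floor_iff)
  ultimately show ?thesis by simp
qed

lemma card_close_pairs_insert:
  assumes "finite S" "S \<subseteq> {1..n div 2}" "i \<in> {1..n div 2}" "i \<notin> S"
  shows "card (close_pairs n t (insert i S)) * (n - 2 * card S - 1)
           \<le> 2 * nat \<lfloor>t\<rfloor> * card (close_pairs n t S)"
proof -
  define F where "F = {1..n} - (\<Union>j\<in>S. {2*j - 1, 2*j}) - {2*i - 1}"
  define D where "D = {\<delta>::int. \<delta> \<noteq> 0 \<and> \<bar>\<delta>\<bar> \<le> \<lfloor>t\<rfloor>}"
  define \<Phi> where "\<Phi> = (\<lambda>(\<sigma>::nat \<Rightarrow> nat, q). (\<sigma> \<circ> Transposition.transpose (2*i) q, int (\<sigma> (2*i)) - int (\<sigma> (2*i - 1))))"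
  have sub: "close_pairs n t (insert i S) \<times> F \<subseteq> {\<sigma>. inj \<sigma>} \<times> (UNIV - {2*i - 1})"
    by (auto simp: close_pairs_def F_def permutes_inj)
  have "2*i - 1 \<noteq> 2*i" using assms(3) by auto
  then have inj: "inj_on \<Phi> (close_pairs n t (insert i S) \<times> F)"
    unfolding \<Phi>_def by (rule inj_on_subset[OF inj_on_transpose_gap sub])
  have "\<Phi> ` (close_pairs n t (insert i S) \<times> F) \<subseteq> close_pairs n t S \<times> D"
  proof (rule image_subsetI)
    fix x assume "x \<in> close_pairs n t (insert i S) \<times> F"
    then obtain \<sigma> q where x: "x = (\<sigma>, q)" and \<sigma>: "\<sigma> \<in> close_pairs n t (insert i S)" and "q \<in> F"
      by blast
    have \<sigma>S: "\<sigma> \<in> close_pairs n t S" using \<sigma> by (simp add: close_pairs_def)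
    have "\<sigma> \<circ> Transposition.transpose (2*i) q \<in> close_pairs n t S"
      by (rule transpose_mem_close_pairs[OF \<sigma>S]) (use assms \<open>q \<in> F\<close> in \<open>auto simp: F_def\<close>)
    moreover have "int (\<sigma> (2*i)) - int (\<sigma> (2*i - 1)) \<in> D"
      unfolding D_def using gap_mem_nonzero_abs_le[OF \<sigma>] assms(3) by simp
    ultimately show "\<Phi> x \<in> close_pairs n t S \<times> D" by (simp add: \<Phi>_def x)
  qed
  moreover have "finite D" unfolding D_def
    by (rule finite_subset[of _ "{-\<lfloor>t\<rfloor>..\<lfloor>t\<rfloor>}"]) auto
  ultimately have "card (close_pairs n t (insert i S) \<times> F) \<le> card (close_pairs n t S \<times> D)"
    by (intro card_inj_on_le[OF inj]) (simp_all add: finite_close_pairs)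
  have "n - 2 * card S - 1 \<le> card F" unfolding F_def by (rule card_Diff_pairs_ge[OF assms(1)])
  then have "card (close_pairs n t (insert i S)) * (n - 2 * card S - 1)
      \<le> card (close_pairs n t (insert i S) \<times> F)"
    by (simp add: card_cartesian_product)
  also have "\<dots> \<le> card (close_pairs n t S \<times> D)" by fact
  also have "\<dots> = card D * card (close_pairs n t S)" by (simp add: card_cartesian_product)
  also have "\<dots> \<le> 2 * nat \<lfloor>t\<rfloor> * card (close_pairs n t S)"
    unfolding D_def by (intro mult_le_mono1 card_nonzero_abs_le)
  finally show ?thesis .
qed

lemma card_close_pairs_le:
  assumes "finite S" "S \<subseteq> {1..n div 2}"
  shows "card (close_pairs n t S) * (\<Prod>j<card S. n - 2*j - 1) \<le> (2 * nat \<lfloor>t\<rfloor>) ^ card S * fact n"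
  using assms
proof (induction S rule: finite_induct)
  case empty
  have "close_pairs n t {} = {\<pi>. \<pi> permutes {1..n}}" by (simp add: close_pairs_def)
  then show ?case by (simp add: card_permutations)
next
  case (insert i S)
  define P where "P = (\<Prod>j<card S. n - 2*j - 1)"
  define d where "d = 2 * nat \<lfloor>t\<rfloor>"
  have "card (close_pairs n t (insert i S)) * (\<Prod>j<card (insert i S). n - 2*j - 1)
      = (card (close_pairs n t (insert i S)) * (n - 2 * card S - 1)) * P"
    using insert by (simp add: P_def)
  also have "\<dots> \<le> d * (card (close_pairs n t S) * P)"
    using card_close_pairs_insert[of S n i t] insert by (simp add: d_def)
  also have "\<dots> \<le> d * (d ^ card S * fact n)"
    using insert by (intro mult_le_mono2) (simp add: P_def d_def)
  also have "\<dots> = d ^ card (insert i S) * fact n" using insert by simp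
  finally show ?case by (simp add: d_def)
qed

lemma many_close_pairs_subset_UN:
  "{\<pi>. \<pi> permutes {1..n} \<and>
       k \<le> card {i \<in> {1..m}. \<bar>real (\<pi> (2*i - 1)) - real (\<pi> (2*i))\<bar> \<le> t}}
     \<subseteq> (\<Union>S\<in>{S. S \<subseteq> {1..m} \<and> card S = k}. close_pairs n t S)"
proof
  fix \<pi> assume "\<pi> \<in> {\<pi>. \<pi> permutes {1..n} \<and>
       k \<le> card {i \<in> {1..m}. \<bar>real (\<pi> (2*i - 1)) - real (\<pi> (2*i))\<bar> \<le> t}}"
  then obtain S where "S \<subseteq> {i \<in> {1..m}. \<bar>real (\<pi> (2*i - 1)) - real (\<pi> (2*i))\<bar> \<le> t}"
    "card S = k" "\<pi> permutes {1..n}"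
    by (metis (lifting) mem_Collect_eq obtain_subset_with_card_n)
  then have "S \<in> {S. S \<subseteq> {1..m} \<and> card S = k}" "\<pi> \<in> close_pairs n t S"
    by (auto simp: close_pairs_def)
  then show "\<pi> \<in> (\<Union>S\<in>{S. S \<subseteq> {1..m} \<and> card S = k}. close_pairs n t S)" by blast
qed

lemma card_many_close_pairs_le:
  "card {\<pi>. \<pi> permutes {1..n} \<and>
           k \<le> card {i \<in> {1..n div 2}. \<bar>real (\<pi> (2*i - 1)) - real (\<pi> (2*i))\<bar> \<le> t}} * fact k
     \<le> (2 * nat \<lfloor>t\<rfloor>) ^ k * fact n"
  (is "card ?E * _ \<le> _")
proof (cases "k \<le> n div 2")
  case False
  have "\<pi> \<notin> ?E" for \<pi>
    using False card_filter_atLeastAtMost_le[of "n div 2"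
        "\<lambda>i. \<bar>real (\<pi> (2*i - 1)) - real (\<pi> (2*i))\<bar> \<le> t"]
    by simp
  then have "?E = {}" by blast
  then show ?thesis by (simp only: card.empty mult_0 zero_le)
next
  case True
  define I where "I = {S. S \<subseteq> {1..n div 2} \<and> card S = k}"
  define Pk where "Pk = (\<Prod>j<k. n - 2*j - 1)"
  have "finite I" unfolding I_def by (rule finite_subset[of _ "Pow {1..n div 2}"]) auto
  have "?E \<subseteq> (\<Union>S\<in>I. close_pairs n t S)"
    unfolding I_def by (rule many_close_pairs_subset_UN)
  then have "card ?E \<le> card (\<Union>S\<in>I. close_pairs n t S)"
    by (intro card_mono) (simp_all add: \<open>finite I\<close> finite_close_pairs)
  also have "\<dots> \<le> (\<Sum>S\<in>I. card (close_pairs n t S))" by (rule card_UN_le[OF \<open>finite I\<close>])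
  finally have union_bound: "card ?E \<le> (\<Sum>S\<in>I. card (close_pairs n t S))" .
  have "(n div 2 choose k) * (card ?E * fact k) = card ?E * ((n div 2 choose k) * fact k)"
    by simp
  also have "\<dots> \<le> card ?E * Pk"
    unfolding Pk_def by (intro mult_le_mono2 choose_mul_fact_le_prod[OF True]) simp
  also have "\<dots> \<le> (\<Sum>S\<in>I. card (close_pairs n t S) * Pk)"
    using union_bound by (simp add: sum_distrib_right[symmetric])
  also have "\<dots> \<le> (\<Sum>S\<in>I. (2 * nat \<lfloor>t\<rfloor>) ^ k * fact n)"
  proof (rule sum_mono)
    fix S assume "S \<in> I"
    then have "finite S" "S \<subseteq> {1..n div 2}" "card S = k"
      by (auto simp: I_def intro: finite_subset)
    then show "card (close_pairs n t S) * Pk \<le> (2 * nat \<lfloor>t\<rfloor>) ^ k * fact n"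
      using card_close_pairs_le[of S n t] by (simp add: Pk_def)
  qed
  also have "\<dots> = (n div 2 choose k) * ((2 * nat \<lfloor>t\<rfloor>) ^ k * fact n)"
    by (simp add: I_def n_subsets)
  finally show ?thesis using True by simp
qed

lemma prob_many_close_pairs_le:
  "measure_pmf.prob (pmf_of_set {\<pi>. \<pi> permutes {1..n}})
     {\<pi>. k \<le> card {i \<in> {1..n div 2}. \<bar>real (\<pi> (2*i - 1)) - real (\<pi> (2*i))\<bar> \<le> t}}
   \<le> (2 * real (nat \<lfloor>t\<rfloor>)) ^ k / fact k"
  (is "measure_pmf.prob (pmf_of_set ?P) ?A \<le> _")
proof -
  have "?P \<noteq> {}" using permutes_id by blast
  have "finite ?P" by (rule finite_permutations) simp
  have "card ?P = fact n" by (simp add: card_permutations)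
  define X where "X = card (?P \<inter> ?A)"
  have "X * fact k \<le> (2 * nat \<lfloor>t\<rfloor>) ^ k * fact n"
    unfolding X_def Collect_conj_eq[symmetric] by (rule card_many_close_pairs_le)
  then have "real (X * fact k) \<le> real ((2 * nat \<lfloor>t\<rfloor>) ^ k * fact n)" by (simp only: of_nat_le_iff)
  then have "real X * fact k \<le> (2 * real (nat \<lfloor>t\<rfloor>)) ^ k * fact n" by simp
  have "measure_pmf.prob (pmf_of_set ?P) ?A = real X / fact n"
    by (simp only: X_def measure_pmf_of_set[OF \<open>?P \<noteq> {}\<close> \<open>finite ?P\<close>] \<open>card ?P = fact n\<close> of_nat_fact)
  also have "\<dots> \<le> (2 * real (nat \<lfloor>t\<rfloor>)) ^ k / fact k"
    using \<open>real X * fact k \<le> (2 * real (nat \<lfloor>t\<rfloor>)) ^ k * fact n\<close> by (simp add: field_simps)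
  finally show ?thesis .
qed

theorem claim3p12:
  fixes n :: nat and r :: real
  assumes "r \<ge> 1"
  shows "measure_pmf.prob (pmf_of_set {\<pi>. \<pi> permutes {1..n}})
           {\<pi>. real (card {i \<in> {1..n div 2}.
                     \<bar>real (\<pi> (2*i - 1)) - real (\<pi> (2*i))\<bar> \<le> r / 12}) \<ge> r}
         \<le> 2 powr (- r)"
proof -
  define k where "k = nat \<lceil>r\<rceil>"
  define d where "d = nat \<lfloor>r / 12\<rfloor>"
  have "r \<le> real k" unfolding k_def by linarith
  then have "12 * d \<le> k" unfolding d_def using assms by linarith
  have "measure_pmf.prob (pmf_of_set {\<pi>. \<pi> permutes {1..n}})
          {\<pi>. real (card {i \<in> {1..n div 2}.
                    \<bar>real (\<pi> (2*i - 1)) - real (\<pi> (2*i))\<bar> \<le> r / 12}) \<ge> r}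
        \<le> (2 * real d) ^ k / fact k"
    unfolding k_def d_def nat_ceiling_le_eq[symmetric] by (rule prob_many_close_pairs_le)
  also have "\<dots> \<le> 1 / 2 ^ k" using \<open>12 * d \<le> k\<close> by (rule power_div_fact_le_inverse_two_power)
  also have "\<dots> = 2 powr (- real k)" by (simp add: powr_minus powr_realpow divide_inverse)
  also have "\<dots> \<le> 2 powr (- r)" using \<open>r \<le> real k\<close> by simp
  finally show ?thesis .
qed

end
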